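(* With the subspaces defined in the context (for any $a,b$ with $|a|^2+|b|^2=1$, $a,b\ne0$), and for unit vectors $\ket{s_A},\ket{s_B}\in\mathbb C^2$ with $p[\Pi(h)]=(\bra{s_A}\otimes\bra{s_B})\Pi(h)(\ket{s_A}\otimes\ket{s_B})$: (1) $\mathfrak H_{23W}\vee\mathfrak H_{23X}\vee\mathfrak H_{23Y}\vee\mathfrak H_{14Z}=\mathbb C^2\otimes\mathbb C^2$, and for every choice of unit vectors $\ket{s_A},\ket{s_B}$, $p[\Pi(\mathfrak H_{23W})]+p[\Pi(\mathfrak H_{23X})]+p[\Pi(\mathfrak H_{23Y})]+p[\Pi(\mathfrak H_{14Z})]\ge p[\Pi(\mathfrak H_{23W}\vee\mathfrak H_{23X}\vee\mathfrak H_{23Y}\vee\mathfrak H_{14Z})]=1.$ (2) The quantity $\Omega'=p[\Pi(\mathfrak H_{23W})]+p[\Pi(\mathfrak H_{23X})]-p[\Pi(\mathfrak H_{23W}\vee\mathfrak H_{23X})]$ takes both strictly positive and strictly negative values as $\ket{s_A},\ket{s_B}$ range over unit vectors; i.e. this two-term Boole inequality fails for some product states.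
   Context: In $\mathbb C^2$ let $\ket0=(0,1)^T$, $\ket1=(1,0)^T$, and let $U=\begin{pmatrix}a&b\\-\bar b&\bar a\end{pmatrix}$ with $|a|^2+|b|^2=1$, $a,b\neq0$; the same $U$ acts on both factors of $\mathbb C^2\otimes\mathbb C^2$. Define one-dimensional subspaces (span of the indicated vector): $\mathfrak H_{1W}=\langle\ket1\otimes\ket1\rangle$, $\mathfrak H_{2W}=\langle\ket1\otimes\ket0\rangle$, $\mathfrak H_{3W}=\langle\ket0\otimes\ket1\rangle$, $\mathfrak H_{4W}=\langle\ket0\otimes\ket0\rangle$; $\mathfrak H_{1X}=\langle\ket1\otimes U\ket1\rangle$, $\mathfrak H_{2X}=\langle\ket1\otimes U\ket0\rangle$, $\mathfrak H_{3X}=\langle\ket0\otimes U\ket1\rangle$, $\mathfrak H_{4X}=\langle\ket0\otimes U\ket0\rangle$; $\mathfrak H_{1Y}=\langle U\ket1\otimes\ket1\rangle$, $\mathfrak H_{2Y}=\langle U\ket1\otimes\ket0\rangle$, $\mathfrak H_{3Y}=\langle U\ket0\otimes\ket1\rangle$, $\mathfrak H_{4Y}=\langle U\ket0\otimes\ket0\rangle$; $\mathfrak H_{1Z}=\langle U\ket1\otimes U\ket1\rangle$, $\mathfrak H_{2Z}=\langle U\ket1\otimes U\ket0\rangle$, $\mathfrak H_{3Z}=\langle U\ket0\otimes U\ket1\rangle$, $\mathfrak H_{4Z}=\langle U\ket0\otimes U\ket0\rangle$. For $V\in\{W,X,Y,Z\}$ let $\mathfrak H_{14V}=\mathfrak H_{1V}\vee\mathfrak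 H_{4V}$ and $\mathfrak H_{23V}=\mathfrak H_{2V}\vee\mathfrak H_{3V}$, where $h\vee h'=\mathrm{span}(h\cup h')$. $\Pi(h)$ is the orthogonal projector onto $h$. *)

theory Defs
  imports "HOL-Analysis.Analysis"
begin

type_synonym qubit = "complex ^ 2"
type_synonym qubit2 = "complex ^ (2 \<times> 2)"

definition cinner :: "complex ^ 'n \<Rightarrow> complex ^ 'n \<Rightarrow> complex" where
  "cinner x y = (\<Sum>i\<in>UNIV. cnj (x $ i) * y $ i)"

definition tensor :: "complex ^ 'n \<Rightarrow> complex ^ 'm \<Rightarrow> complex ^ ('n \<times> 'm)" where
  "tensor u v = (\<chi> p. u $ fst p * v $ snd p)"

definition ket0 :: qubit where "ket0 = vector [0, 1]"
definition ket1 :: qubit where "ket1 = vector [1, 0]"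

definition Uop :: "complex \<Rightarrow> complex \<Rightarrow> complex ^ 2 ^ 2" where
  "Uop a b = vector [vector [a, b], vector [- cnj b, cnj a]]"

definition join :: "qubit2 set \<Rightarrow> qubit2 set \<Rightarrow> qubit2 set" (infixl "\<squnion>\<^sub>H" 65) where
  "join h h' = vec.span (h \<union> h')"

definition Proj :: "qubit2 set \<Rightarrow> qubit2 \<Rightarrow> qubit2" where
  "Proj h x = (THE y. y \<in> h \<and> (\<forall>z\<in>h. cinner z (x - y) = 0))"

text \<open>p[Pi(h)] = (<sA| (x) <sB|) Pi(h) (|sA> (x) |sB>); this is real, we take the real part.\<close>
definition prob :: "qubit \<Rightarrow> qubit \<Rightarrow> qubit2 set \<Rightarrow> real" where
  "prob sA sB h = Re (cinner (tensor sA sB) (Proj h (tensor sA sB)))"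

datatype frame = W | X | Y | Z

definition opA :: "complex \<Rightarrow> complex \<Rightarrow> frame \<Rightarrow> complex ^ 2 ^ 2" where
  "opA a b V = (if V = Y \<or> V = Z then Uop a b else mat 1)"
definition opB :: "complex \<Rightarrow> complex \<Rightarrow> frame \<Rightarrow> complex ^ 2 ^ 2" where
  "opB a b V = (if V = X \<or> V = Z then Uop a b else mat 1)"

definition H1 :: "complex \<Rightarrow> complex \<Rightarrow> frame \<Rightarrow> qubit2 set" where
  "H1 a b V = vec.span {tensor (opA a b V *v ket1) (opB a b V *v ket1)}"
definition H2 :: "complex \<Rightarrow> complex \<Rightarrow> frame \<Rightarrow> qubit2 set" where
  "H2 a b V = vec.span {tensor (opA a b V *v ket1) (opB a b V *v ket0)}"
definition H3 :: "complex \<Rightarrow> complex \<Rightarrow> frame \<Rightarrow> qubit2 set" where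
  "H3 a b V = vec.span {tensor (opA a b V *v ket0) (opB a b V *v ket1)}"
definition H4 :: "complex \<Rightarrow> complex \<Rightarrow> frame \<Rightarrow> qubit2 set" where
  "H4 a b V = vec.span {tensor (opA a b V *v ket0) (opB a b V *v ket0)}"

definition H14 :: "complex \<Rightarrow> complex \<Rightarrow> frame \<Rightarrow> qubit2 set" where
  "H14 a b V = H1 a b V \<squnion>\<^sub>H H4 a b V"
definition H23 :: "complex \<Rightarrow> complex \<Rightarrow> frame \<Rightarrow> qubit2 set" where
  "H23 a b V = H2 a b V \<squnion>\<^sub>H H3 a b V"

end

theory Submission imports Defs begin

text \<open>
  Already \<open>H23 W \<squnion> H23 X\<close> is the whole space: for \<open>b \<noteq> 0\<close> its four spanning product
  vectors reach every computational basis vector. Hence every join containing it has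
  probability 1, and the two-term Boole quantity is \<open>p(H23 W) + p(H23 X) - 1\<close>.
  Each of the subspaces is spanned by two orthonormal product vectors, so its probability
  is a sum of two products of single-qubit outcome probabilities. Writing \<open>x, y\<close> for the
  probabilities of \<open>|0\<rangle>\<close> and \<open>u, v\<close> for those of \<open>U|0\<rangle>\<close> on the two qubits, the four-term sum
  minus 1 is twice \<open>x + y - xy - xv - uy + uv\<close>, a multilinear polynomial that is nonnegative
  on the unit cube. The two-term quantity equals \<open>|a|\<^sup>2\<close> at \<open>|0\<rangle>|1\<rangle>\<close> and \<open>-|a|\<^sup>2\<close> at \<open>|0\<rangle>|0\<rangle>\<close>.
\<close>

lemma cinner_add_left: "cinner (x + y) z = cinner x z + cinner y z"
  unfolding cinner_def by (simp add: distrib_right sum.distrib)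

lemma cinner_add_right: "cinner x (y + z) = cinner x y + cinner x z"
  unfolding cinner_def by (simp add: distrib_left sum.distrib)

lemma cinner_diff_right: "cinner x (y - z) = cinner x y - cinner x z"
  unfolding cinner_def by (simp add: right_diff_distrib sum_subtractf)

lemma cinner_scale_left: "cinner (c *s x) y = cnj c * cinner x y"
  unfolding cinner_def by (simp add: sum_distrib_left mult_ac)

lemma cinner_scale_right: "cinner x (c *s y) = c * cinner x y"
  unfolding cinner_def by (simp add: sum_distrib_left mult_ac)

lemma cinner_zero_left: "cinner 0 y = 0"
  unfolding cinner_def by simp

lemma cinner_commute: "cinner x y = cnj (cinner y x)"
  unfolding cinner_def by (simp add: mult.commute)

lemma cinner_self: "cinner x x = of_real (\<Sum>i\<in>UNIV. (cmod (x $ i))\<^sup>2)"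
  unfolding cinner_def by (simp add: complex_norm_square mult.commute del: of_real_power)

lemma cinner_self_eq_0: "cinner x x = 0 \<longleftrightarrow> x = 0"
proof
  assume "cinner x x = 0"
  then have "(\<Sum>i\<in>UNIV. (cmod (x $ i))\<^sup>2) = 0"
    unfolding cinner_self of_real_eq_0_iff .
  then have "\<forall>i\<in>UNIV. (cmod (x $ i))\<^sup>2 = 0"
    by (subst (asm) sum_nonneg_eq_0_iff) auto
  then show "x = 0" by (simp add: vec_eq_iff)
qed (simp add: cinner_zero_left)

lemma cinner_tensor:
  "cinner (tensor u v) (tensor u' v') = cinner u u' * cinner (v :: complex ^ 'm) v'"
  unfolding cinner_def tensor_def
  by (simp add: UNIV_Times_UNIV[symmetric] sum.cartesian_product sum_product mult_ac split_beta
      del: UNIV_Times_UNIV)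

lemma cinner_vector2:
  "cinner (vector [x1, x2] :: complex ^ 2) y = cnj x1 * y $ 1 + cnj x2 * y $ 2"
  by (simp add: cinner_def sum_2)

lemma cinner_orthogonal_span:
  assumes "\<forall>e\<in>S. cinner e w = 0" and "z \<in> vec.span S"
  shows "cinner z w = 0"
proof -
  have "vec.subspace {z. cinner z w = 0}"
    by (simp add: vec.subspace_def cinner_zero_left cinner_add_left cinner_scale_left)
  then have "vec.span S \<subseteq> {z. cinner z w = 0}"
    using assms(1) by (intro vec.span_minimal) auto
  then show ?thesis using assms(2) by auto
qed

lemma Proj_eqI:
  assumes "vec.subspace h" "y \<in> h" "\<forall>z\<in>h. cinner z (x - y) = 0"
  shows "Proj h x = y"
  unfolding Proj_def
proof (rule the_equality)
  show "y \<in> h \<and> (\<forall>z\<in>h. cinner z (x - y) = 0)" using assms by auto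
next
  fix y' assume y': "y' \<in> h \<and> (\<forall>z\<in>h. cinner z (x - y') = 0)"
  then have "y' - y \<in> h" using assms by (simp add: vec.subspace_diff)
  then have "cinner (y' - y) ((x - y) - (x - y')) = 0"
    using assms y' by (simp add: cinner_diff_right)
  then show "y' = y" by (simp add: cinner_self_eq_0)
qed

lemma Proj_span_orthonormal_pair:
  assumes "cinner e1 e1 = 1" "cinner e2 e2 = 1" "cinner e1 e2 = 0"
  shows "Proj (vec.span {e1, e2}) x = cinner e1 x *s e1 + cinner e2 x *s e2"
proof (rule Proj_eqI)
  show "cinner e1 x *s e1 + cinner e2 x *s e2 \<in> vec.span {e1, e2}"
    by (intro vec.span_add vec.span_scale vec.span_base) auto
  let ?r = "x - (cinner e1 x *s e1 + cinner e2 x *s e2)"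
  have "cinner e2 e1 = 0" using assms(3) cinner_commute[of e2 e1] by simp
  then have "\<forall>e\<in>{e1, e2}. cinner e ?r = 0"
    using assms by (simp add: cinner_diff_right cinner_add_right cinner_scale_right)
  then show "\<forall>z\<in>vec.span {e1, e2}. cinner z ?r = 0"
    using cinner_orthogonal_span by blast
qed simp

lemma prob_span_orthonormal_pair:
  assumes "cinner e1 e1 = 1" "cinner e2 e2 = 1" "cinner e1 e2 = 0"
  shows "prob sA sB (vec.span {e1, e2})
    = (cmod (cinner e1 (tensor sA sB)))\<^sup>2 + (cmod (cinner e2 (tensor sA sB)))\<^sup>2"
proof -
  define s where "s = tensor sA sB"
  have "cinner s (Proj (vec.span {e1, e2}) s)
      = cinner e1 s * cnj (cinner e1 s) + cinner e2 s * cnj (cinner e2 s)"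
    unfolding Proj_span_orthonormal_pair[OF assms]
    by (simp add: cinner_add_right cinner_scale_right cinner_commute[of s])
  then show ?thesis
    unfolding prob_def s_def[symmetric]
    by (simp only: complex_norm_square[symmetric] of_real_add[symmetric] Re_complex_of_real)
qed

lemma prob_span_product_pair:
  assumes "cinner e1 e1 = 1" "cinner f1 f1 = 1" "cinner e2 e2 = 1" "cinner f2 f2 = 1"
    and "cinner e1 e2 * cinner f1 f2 = 0"
  shows "prob sA sB (vec.span {tensor e1 f1, tensor e2 f2})
    = (cmod (cinner e1 sA))\<^sup>2 * (cmod (cinner f1 sB))\<^sup>2
      + (cmod (cinner e2 sA))\<^sup>2 * (cmod (cinner f2 sB))\<^sup>2"
  using assms by (subst prob_span_orthonormal_pair) (simp_all add: cinner_tensor norm_mult power_mult_distrib)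

lemma norm_qubit_squared: "(norm (s :: qubit))\<^sup>2 = (cmod (s $ 1))\<^sup>2 + (cmod (s $ 2))\<^sup>2"
  by (simp add: norm_vec_def L2_set_def sum_2)

lemma prob_UNIV:
  assumes "norm sA = 1" "norm sB = 1"
  shows "prob sA sB UNIV = 1"
proof -
  have "Proj UNIV x = x" for x by (rule Proj_eqI) (auto simp: cinner_def)
  then have "prob sA sB UNIV = (\<Sum>i\<in>UNIV. (cmod (tensor sA sB $ i))\<^sup>2)"
    by (simp add: prob_def cinner_self)
  also have "\<dots> = (\<Sum>i\<in>UNIV. (cmod (sA $ i))\<^sup>2) * (\<Sum>j\<in>UNIV. (cmod (sB $ j))\<^sup>2)"
    by (simp add: UNIV_Times_UNIV[symmetric] sum.cartesian_product sum_product split_beta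
        tensor_def norm_mult power_mult_distrib del: UNIV_Times_UNIV)
  also have "\<dots> = (norm sA)\<^sup>2 * (norm sB)\<^sup>2"
    by (simp add: norm_vec_def L2_set_def sum_nonneg)
  finally show ?thesis using assms by simp
qed

lemma join_spans: "vec.span {u} \<squnion>\<^sub>H vec.span {v} = vec.span {u, v}"
  unfolding join_def
proof (rule antisym)
  show "vec.span (vec.span {u} \<union> vec.span {v}) \<subseteq> vec.span {u, v}"
    by (rule vec.span_minimal) (auto intro: vec.span_mono[THEN subsetD])
  show "vec.span {u, v} \<subseteq> vec.span (vec.span {u} \<union> vec.span {v})"
    by (rule vec.span_mono) (auto intro: vec.span_base)
qed

lemma join_UNIV_left: "UNIV \<squnion>\<^sub>H h = UNIV"
  by (simp add: join_def)

lemma H23_eq_span: "H23 a b V = vec.span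
  {tensor (opA a b V *v ket1) (opB a b V *v ket0), tensor (opA a b V *v ket0) (opB a b V *v ket1)}"
  by (simp add: H23_def H2_def H3_def join_spans)

lemma H14_eq_span: "H14 a b V = vec.span
  {tensor (opA a b V *v ket1) (opB a b V *v ket1), tensor (opA a b V *v ket0) (opB a b V *v ket0)}"
  by (simp add: H14_def H1_def H4_def join_spans)

lemma Uop_ket0: "Uop a b *v ket0 = vector [b, cnj a]"
  by (simp add: vec_eq_iff forall_2 matrix_vector_mult_def sum_2 Uop_def ket0_def)

lemma Uop_ket1: "Uop a b *v ket1 = vector [a, - cnj b]"
  by (simp add: vec_eq_iff forall_2 matrix_vector_mult_def sum_2 Uop_def ket1_def)

lemma ket_components: "ket0 $ 1 = 0" "ket0 $ 2 = 1" "ket1 $ 1 = 1" "ket1 $ 2 = 0"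
  by (simp_all add: ket0_def ket1_def)

lemma cinner_ket0: "cinner ket0 v = v $ 2" and cinner_ket1: "cinner ket1 v = v $ 1"
  by (simp_all add: ket0_def ket1_def cinner_vector2)

lemma frame_ops: "opA a b V \<in> {mat 1, Uop a b}" "opB a b V \<in> {mat 1, Uop a b}"
  by (simp_all add: opA_def opB_def)

lemma Uop_parseval:
  assumes "cnj a * a + cnj b * b = 1"
  shows "(cmod (cnj b * s1 + a * s2))\<^sup>2 + (cmod (cnj a * s1 - b * s2))\<^sup>2
    = (cmod s1)\<^sup>2 + (cmod s2)\<^sup>2"
proof -
  have "complex_of_real ((cmod (cnj b * s1 + a * s2))\<^sup>2 + (cmod (cnj a * s1 - b * s2))\<^sup>2)
      = (cnj b * s1 + a * s2) * cnj (cnj b * s1 + a * s2)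
        + (cnj a * s1 - b * s2) * cnj (cnj a * s1 - b * s2)"
    by (simp only: of_real_add complex_norm_square)
  also have "\<dots> = (cnj a * a + cnj b * b) * (s1 * cnj s1 + s2 * cnj s2)"
    by (simp add: algebra_simps)
  also have "\<dots> = complex_of_real ((cmod s1)\<^sup>2 + (cmod s2)\<^sup>2)"
    using assms by (simp only: of_real_add complex_norm_square mult_1_left)
  finally show ?thesis by (simp only: of_real_eq_iff)
qed

lemma frame_basis_orthonormal:
  assumes "cnj a * a + cnj b * b = 1" and "M \<in> {mat 1, Uop a b}"
  shows "cinner (M *v ket0) (M *v ket0) = 1" "cinner (M *v ket1) (M *v ket1) = 1"
    "cinner (M *v ket0) (M *v ket1) = 0" "cinner (M *v ket1) (M *v ket0) = 0"
  using assms
  by (auto simp: Uop_ket0 Uop_ket1 cinner_vector2 cinner_ket0 cinner_ket1 ket_components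
      mult.commute add.commute)

lemma frame_basis_parseval:
  assumes "cnj a * a + cnj b * b = 1" and "M \<in> {mat 1, Uop a b}"
  shows "(cmod (cinner (M *v ket0) s))\<^sup>2 + (cmod (cinner (M *v ket1) s))\<^sup>2 = (norm s)\<^sup>2"
  using assms Uop_parseval[OF assms(1), of "s $ 1" "s $ 2"]
  by (auto simp: Uop_ket0 Uop_ket1 cinner_vector2 cinner_ket0 cinner_ket1 norm_qubit_squared)

lemma prob_H23:
  assumes "cnj a * a + cnj b * b = 1"
  shows "prob sA sB (H23 a b V)
    = (cmod (cinner (opA a b V *v ket1) sA))\<^sup>2 * (cmod (cinner (opB a b V *v ket0) sB))\<^sup>2
      + (cmod (cinner (opA a b V *v ket0) sA))\<^sup>2 * (cmod (cinner (opB a b V *v ket1) sB))\<^sup>2"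
  unfolding H23_eq_span
  by (rule prob_span_product_pair) (simp_all add: frame_basis_orthonormal[OF assms frame_ops(1)]
      frame_basis_orthonormal[OF assms frame_ops(2)])

lemma prob_H14:
  assumes "cnj a * a + cnj b * b = 1"
  shows "prob sA sB (H14 a b V)
    = (cmod (cinner (opA a b V *v ket1) sA))\<^sup>2 * (cmod (cinner (opB a b V *v ket1) sB))\<^sup>2
      + (cmod (cinner (opA a b V *v ket0) sA))\<^sup>2 * (cmod (cinner (opB a b V *v ket0) sB))\<^sup>2"
  unfolding H14_eq_span
  by (rule prob_span_product_pair) (simp_all add: frame_basis_orthonormal[OF assms frame_ops(1)]
      frame_basis_orthonormal[OF assms frame_ops(2)])

lemma subspace_eq_UNIV_if_axes:
  assumes "vec.subspace S" and "\<And>i. axis i 1 \<in> S"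
  shows "S = (UNIV :: ('a :: field ^ 'n) set)"
proof -
  have "vec.span cart_basis \<subseteq> S"
    using assms unfolding cart_basis_def by (intro vec.span_minimal) auto
  then show ?thesis by auto
qed

lemma join_H23_W_X:
  assumes "b \<noteq> 0"
  shows "H23 a b W \<squnion>\<^sub>H H23 a b X = UNIV"
proof (rule subspace_eq_UNIV_if_axes)
  let ?S = "H23 a b W \<squnion>\<^sub>H H23 a b X"
  show sub: "vec.subspace ?S" unfolding join_def by simp
  define w1 where "w1 = (tensor ket1 ket0 :: qubit2)"
  define w2 where "w2 = (tensor ket0 ket1 :: qubit2)"
  define x1 where "x1 = (tensor ket1 (vector [b, cnj a]) :: qubit2)"
  define x2 where "x2 = (tensor ket0 (vector [a, - cnj b]) :: qubit2)"
  have spanning: "w1 \<in> ?S" "w2 \<in> ?S" "x1 \<in> ?S" "x2 \<in> ?S"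
    unfolding join_def H23_eq_span w1_def w2_def x1_def x2_def
    by (auto simp: opA_def opB_def Uop_ket0 Uop_ket1 intro!: vec.span_base)
  have "axis (1,2) 1 = w1" "axis (2,1) 1 = w2"
    "axis (1,1) 1 = (1 / b) *s (x1 - cnj a *s w1)"
    "axis (2,2) 1 = (- 1 / cnj b) *s (x2 - a *s w2)"
    using assms by (simp_all add: vec_eq_iff split_paired_All forall_2 axis_def tensor_def
        w1_def w2_def x1_def x2_def ket0_def ket1_def)
  then show "axis i 1 \<in> ?S" for i :: "2 \<times> 2"
    using spanning sub exhaust_2[of "fst i"] exhaust_2[of "snd i"]
    by (cases i) (auto intro!: vec.subspace_scale vec.subspace_diff)
qed

lemma multilinear_unit_cube_nonneg:
  fixes x y u v :: real
  assumes "0 \<le> x" "x \<le> 1" "0 \<le> y" "y \<le> 1" "0 \<le> u" "u \<le> 1" "0 \<le> v" "v \<le> 1"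
  shows "0 \<le> x + y - x * y - x * v - u * y + u * v"
proof -
  have "x + y - x * y - x * v - u * y + u * v
      = x * (1 - y) * (1 - v) + y * (1 - x) * (1 - u) + x * y * (1 - u) * (1 - v)
        + u * v * (1 - x * y)"
    by (simp add: algebra_simps)
  also have "0 \<le> \<dots>"
    using assms by (intro add_nonneg_nonneg mult_nonneg_nonneg) (auto simp: mult_le_one)
  finally show ?thesis .
qed

lemma prob_four_frames_ge_1:
  assumes ab: "cnj a * a + cnj b * b = 1" and unit: "norm sA = 1" "norm sB = 1"
  shows "1 \<le> prob sA sB (H23 a b W) + prob sA sB (H23 a b X) + prob sA sB (H23 a b Y)
    + prob sA sB (H14 a b Z)"
proof -
  have "opA a b W = mat 1" "opB a b W = mat 1" "opA a b X = mat 1" "opB a b X = Uop a b"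
    "opA a b Y = Uop a b" "opB a b Y = mat 1" "opA a b Z = Uop a b" "opB a b Z = Uop a b"
    by (simp_all add: opA_def opB_def)
  note probs = prob_H23[OF ab] prob_H14[OF ab] this
  define x where "x = (cmod (cinner ket0 sA))\<^sup>2"
  define y where "y = (cmod (cinner ket0 sB))\<^sup>2"
  define u where "u = (cmod (cinner (Uop a b *v ket0) sA))\<^sup>2"
  define v where "v = (cmod (cinner (Uop a b *v ket0) sB))\<^sup>2"
  have complements: "(cmod (cinner ket1 sA))\<^sup>2 = 1 - x" "(cmod (cinner ket1 sB))\<^sup>2 = 1 - y"
    "(cmod (cinner (Uop a b *v ket1) sA))\<^sup>2 = 1 - u" "(cmod (cinner (Uop a b *v ket1) sB))\<^sup>2 = 1 - v"
    using frame_basis_parseval[OF ab, of "mat 1"] frame_basis_parseval[OF ab, of "Uop a b"] unit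
    unfolding x_def y_def u_def v_def by (auto simp: algebra_simps)
  have "x \<le> 1" "y \<le> 1" "u \<le> 1" "v \<le> 1"
    using complements by (metis diff_ge_0_iff_ge zero_le_power2)+
  moreover have "0 \<le> x" "0 \<le> y" "0 \<le> u" "0 \<le> v"
    unfolding x_def y_def u_def v_def by simp_all
  ultimately have "0 \<le> x + y - x * y - x * v - u * y + u * v"
    by (intro multilinear_unit_cube_nonneg)
  moreover have "prob sA sB (H23 a b W) + prob sA sB (H23 a b X) + prob sA sB (H23 a b Y)
      + prob sA sB (H14 a b Z) = 1 + 2 * (x + y - x * y - x * v - u * y + u * v)"
    unfolding probs by (simp add: complements algebra_simps flip: x_def y_def u_def v_def)
  ultimately show ?thesis by (smt (verit))
qed

theorem mainTheorem6:
  fixes a b :: complex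
  assumes "(cmod a)\<^sup>2 + (cmod b)\<^sup>2 = 1" and "a \<noteq> 0" and "b \<noteq> 0"
  shows "H23 a b W \<squnion>\<^sub>H H23 a b X \<squnion>\<^sub>H H23 a b Y \<squnion>\<^sub>H H14 a b Z = UNIV
     \<and> (\<forall>sA sB :: qubit. norm sA = 1 \<and> norm sB = 1 \<longrightarrow>
          prob sA sB (H23 a b W) + prob sA sB (H23 a b X) + prob sA sB (H23 a b Y)
            + prob sA sB (H14 a b Z)
          \<ge> prob sA sB (H23 a b W \<squnion>\<^sub>H H23 a b X \<squnion>\<^sub>H H23 a b Y \<squnion>\<^sub>H H14 a b Z)
        \<and> prob sA sB (H23 a b W \<squnion>\<^sub>H H23 a b X \<squnion>\<^sub>H H23 a b Y \<squnion>\<^sub>H H14 a b Z) = 1)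
     \<and> (\<exists>sA sB :: qubit. norm sA = 1 \<and> norm sB = 1 \<and>
          prob sA sB (H23 a b W) + prob sA sB (H23 a b X)
            - prob sA sB (H23 a b W \<squnion>\<^sub>H H23 a b X) > 0)
     \<and> (\<exists>sA sB :: qubit. norm sA = 1 \<and> norm sB = 1 \<and>
          prob sA sB (H23 a b W) + prob sA sB (H23 a b X)
            - prob sA sB (H23 a b W \<squnion>\<^sub>H H23 a b X) < 0)"
proof -
  have ab: "cnj a * a + cnj b * b = 1"
    using assms(1) by (metis complex_norm_square mult.commute of_real_1 of_real_add)
  have WX: "H23 a b W \<squnion>\<^sub>H H23 a b X = UNIV" using join_H23_W_X[OF assms(3)] .
  have kets: "norm ket0 = 1" "norm ket1 = 1"
    by (simp_all add: norm_vec_def L2_set_def sum_2 ket0_def ket1_def)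
  have "prob ket0 ket1 (H23 a b W) + prob ket0 ket1 (H23 a b X) - prob ket0 ket1 UNIV = (cmod a)\<^sup>2"
    "prob ket0 ket0 (H23 a b W) + prob ket0 ket0 (H23 a b X) - prob ket0 ket0 UNIV = - (cmod a)\<^sup>2"
    using assms(1)
    by (simp_all add: prob_UNIV kets prob_H23[OF ab] opA_def opB_def Uop_ket0 Uop_ket1
        cinner_vector2 cinner_ket0 cinner_ket1 ket_components)
  then have "0 < prob ket0 ket1 (H23 a b W) + prob ket0 ket1 (H23 a b X) - prob ket0 ket1 UNIV"
    "prob ket0 ket0 (H23 a b W) + prob ket0 ket0 (H23 a b X) - prob ket0 ket0 UNIV < 0"
    using assms(2) by simp_all
  with kets have "\<exists>sA sB :: qubit. norm sA = 1 \<and> norm sB = 1 \<and>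
      0 < prob sA sB (H23 a b W) + prob sA sB (H23 a b X) - prob sA sB UNIV"
    "\<exists>sA sB :: qubit. norm sA = 1 \<and> norm sB = 1 \<and>
      prob sA sB (H23 a b W) + prob sA sB (H23 a b X) - prob sA sB UNIV < 0"
    by blast+
  with prob_four_frames_ge_1[OF ab] prob_UNIV show ?thesis
    unfolding WX join_UNIV_left by simp
qed

end
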